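(* Let $\ell>1$, $c>0$, $\alpha_{acc}>0$, $0<R_{Sch}<R_{ID}$, and $A(t)=\frac{c}{\alpha_{acc}}\Big(\frac{t^{1-\ell}}{1-\ell}-\frac{1}{1-\ell}\Big)$ for $t\ge1$. Then there is $\varepsilon>0$ such that the function $r=r(t)$ given implicitly by $$R_{ID}-r-R_{Sch}\ln\Big(1-\frac{R_{ID}-r}{R_{ID}-R_{Sch}}\Big)=A(t)$$ (with $r(1)=R_{ID}$, i.e. $R_{ID}-r(t)\in[0,R_{ID}-R_{Sch})$) is well defined for all $t\in[1,\infty)$ and satisfies $r(t)\ge R_{Sch}+\varepsilon$ for all $t>1$.
   Context: This $r(t)$ describes the radial null geodesic $\frac{dr}{dt}=-\frac{c}{\alpha_{acc}}t^{-\ell}\big(1-\frac{R_{Sch}}{r}\big)$ starting at $R_{ID}$. *)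

theory Defs
  imports Complex_Main
begin

definition A_fun :: "real \<Rightarrow> real \<Rightarrow> real \<Rightarrow> real \<Rightarrow> real" where
  "A_fun l c alpha t = c / alpha * (t powr (1 - l) / (1 - l) - 1 / (1 - l))"

definition lhs_fun :: "real \<Rightarrow> real \<Rightarrow> real \<Rightarrow> real" where
  "lhs_fun RSch RID r = RID - r - RSch * ln (1 - (RID - r) / (RID - RSch))"

end

theory Submission
  imports Defs
begin

text \<open>Put \<open>D = RID - RSch\<close>. On \<open>RSch < r \<le> RID\<close> the left-hand side equals
  \<open>(RID - r) - RSch * ln ((r - RSch) / D)\<close>: it is continuous and strictly decreasing in \<open>r\<close>,
  vanishes at \<open>r = RID\<close> and tends to \<open>\<infinity>\<close> as \<open>r \<rightarrow> RSch\<close>, so it takes every value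
  \<open>y \<ge> 0\<close> exactly once. Since \<open>A(t) = M (1 - t powr (1 - l))\<close> with \<open>M = c / (alpha (l - 1))\<close>,
  we have \<open>0 \<le> A(t) < M\<close>, and because \<open>RID - r \<ge> 0\<close>, the value \<open>M\<close> bounds the logarithmic
  term alone, which keeps \<open>r - RSch\<close> above \<open>D * exp (- M / RSch)\<close>.\<close>

lemma A_fun_eq:
  "A_fun l c alpha t = c / (alpha * (l - 1)) * (1 - t powr (1 - l))"
proof -
  have "t powr (1 - l) / (1 - l) - 1 / (1 - l) = (1 - t powr (1 - l)) / (l - 1)"
    by (metis diff_divide_distrib minus_diff_eq divide_minus_left divide_minus_right)
  then show ?thesis
    unfolding A_fun_def by simp
qed

lemma A_fun_nonneg:
  assumes "l > 1" "c > 0" "alpha > 0" "t \<ge> 1"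
  shows "0 \<le> A_fun l c alpha t"
proof -
  have "t powr (1 - l) \<le> 1"
    using assms powr_mono[of "1 - l" 0 t] by simp
  then show ?thesis
    using assms by (simp add: A_fun_eq)
qed

lemma A_fun_less:
  assumes "l > 1" "c > 0" "alpha > 0" "t > 0"
  shows "A_fun l c alpha t < c / (alpha * (l - 1))"
proof -
  have "0 < c / (alpha * (l - 1)) * t powr (1 - l)"
    using assms by simp
  then show ?thesis
    by (simp add: A_fun_eq right_diff_distrib)
qed

lemma lhs_fun_eq:
  assumes "RSch < RID"
  shows "lhs_fun RSch RID r = RID - r - RSch * ln ((r - RSch) / (RID - RSch))"
proof -
  have "1 - (RID - r) / (RID - RSch) = (r - RSch) / (RID - RSch)"
    using assms by (simp add: field_simps)
  then show ?thesis
    unfolding lhs_fun_def by simp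
qed

lemma lhs_fun_strict_antimono:
  assumes "0 \<le> RSch" "RSch < RID" "RSch < r1" "r1 < r2"
  shows "lhs_fun RSch RID r2 < lhs_fun RSch RID r1"
proof -
  have "ln ((r1 - RSch) / (RID - RSch)) < ln ((r2 - RSch) / (RID - RSch))"
    using assms by (simp add: divide_strict_right_mono)
  then have "RSch * ln ((r1 - RSch) / (RID - RSch)) \<le> RSch * ln ((r2 - RSch) / (RID - RSch))"
    using assms(1) by (simp add: mult_left_mono)
  then show ?thesis
    using assms by (simp add: lhs_fun_eq)
qed

lemma continuous_on_lhs_fun:
  assumes "RSch < RID"
  shows "continuous_on {RSch<..} (lhs_fun RSch RID)"
proof -
  have "continuous_on {RSch<..} (\<lambda>r. RID - r - RSch * ln ((r - RSch) / (RID - RSch)))"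
    using assms by (intro continuous_intros) auto
  then show ?thesis
    using assms by (simp add: lhs_fun_eq)
qed

text \<open>The logarithm equals \<open>-y / RSch\<close> at the point \<open>RSch + D * exp (- y / RSch)\<close>, so there
  the left-hand side is already at least \<open>y\<close>; the intermediate value theorem does the rest.\<close>

lemma lhs_fun_attains:
  assumes "0 < RSch" "RSch < RID" "0 \<le> y"
  shows "\<exists>r \<in> {RSch<..RID}. lhs_fun RSch RID r = y"
proof -
  define a where "a = RSch + (RID - RSch) * exp (- y / RSch)"
  have "0 \<le> y / RSch"
    using assms by simp
  then have "(RID - RSch) * exp (- y / RSch) \<le> RID - RSch"
    using assms mult_left_le[of "exp (- y / RSch)" "RID - RSch"] by simp
  then have a: "RSch < a" "a \<le> RID"
    using assms unfolding a_def by (simp, linarith)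
  have "lhs_fun RSch RID a = RID - a + y"
    using assms by (simp add: lhs_fun_eq a_def)
  then have "y \<le> lhs_fun RSch RID a"
    using a by simp
  moreover have "lhs_fun RSch RID RID \<le> y"
    using assms by (simp add: lhs_fun_def)
  moreover have "continuous_on {a..RID} (lhs_fun RSch RID)"
    using continuous_on_lhs_fun[OF assms(2)] by (rule continuous_on_subset) (use a in auto)
  ultimately obtain r where "a \<le> r" "r \<le> RID" "lhs_fun RSch RID r = y"
    using IVT2'[of "lhs_fun RSch RID" RID y a] a by blast
  then show ?thesis
    using a by auto
qed

lemma lhs_fun_eq_unique:
  assumes "0 < RSch" "RSch < RID" "0 \<le> y"
  shows "\<exists>!r. r \<in> {RSch<..RID} \<and> lhs_fun RSch RID r = y"
proof -
  have "r1 = r2" if "r1 \<in> {RSch<..RID}" "r2 \<in> {RSch<..RID}"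
    "lhs_fun RSch RID r1 = y" "lhs_fun RSch RID r2 = y" for r1 r2
    using that lhs_fun_strict_antimono[of RSch RID r1 r2] lhs_fun_strict_antimono[of RSch RID r2 r1]
      assms by (cases r1 r2 rule: linorder_cases) auto
  then show ?thesis
    using lhs_fun_attains[OF assms] by blast
qed

lemma lhs_fun_le_imp_ge:
  assumes "0 < RSch" "RSch < RID" "r \<in> {RSch<..RID}" "lhs_fun RSch RID r \<le> M"
  shows "RSch + (RID - RSch) * exp (- M / RSch) \<le> r"
proof -
  define q where "q = (r - RSch) / (RID - RSch)"
  have q: "0 < q"
    using assms by (simp add: q_def)
  have "- RSch * ln q \<le> M"
    using assms by (simp add: lhs_fun_eq q_def)
  then have "- M / RSch \<le> ln q"
    using assms(1) by (simp add: field_simps)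
  then have "exp (- M / RSch) \<le> q"
    using q by (metis exp_le_cancel_iff exp_ln)
  then show ?thesis
    using assms by (simp add: q_def field_simps)
qed

theorem lemma2p1:
  fixes l c alpha RSch RID :: real
  assumes "l > 1" and "c > 0" and "alpha > 0" and "0 < RSch" and "RSch < RID"
  shows "\<exists>\<epsilon>>0.
     (\<forall>t\<ge>1. \<exists>!r. 0 \<le> RID - r \<and> RID - r < RID - RSch \<and>
                   lhs_fun RSch RID r = A_fun l c alpha t) \<and>
     (\<forall>t>1. \<forall>r. 0 \<le> RID - r \<and> RID - r < RID - RSch \<and>
                   lhs_fun RSch RID r = A_fun l c alpha t \<longrightarrow> r \<ge> RSch + \<epsilon>)"
proof -
  define M where "M = c / (alpha * (l - 1))"
  define \<epsilon> where "\<epsilon> = (RID - RSch) * exp (- M / RSch)"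
  have range: "0 \<le> RID - r \<and> RID - r < RID - RSch \<and> P \<longleftrightarrow> r \<in> {RSch<..RID} \<and> P" for r P
    by auto
  have unique: "\<exists>!r. r \<in> {RSch<..RID} \<and> lhs_fun RSch RID r = A_fun l c alpha t"
    if "t \<ge> 1" for t
    using lhs_fun_eq_unique[OF assms(4,5) A_fun_nonneg[OF assms(1-3) that]] .
  have bound: "RSch + \<epsilon> \<le> r"
    if "t > 1" "r \<in> {RSch<..RID}" "lhs_fun RSch RID r = A_fun l c alpha t" for t r
  proof -
    have "A_fun l c alpha t < M"
      using A_fun_less[OF assms(1-3), of t] that(1) by (simp add: M_def)
    then show ?thesis
      using lhs_fun_le_imp_ge[OF assms(4,5) that(2), of M] that(3) by (simp add: \<epsilon>_def)
  qed
  have "0 < \<epsilon>"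
    using assms by (simp add: \<epsilon>_def)
  then show ?thesis
    unfolding range using unique bound by (intro exI[of _ \<epsilon>]) simp
qed

end
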